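(* Let $X$ be a finite $T_0$ topological space. Then $\Psi(x,y)=|U_y\setminus U_x|$ for all $x,y\in X$.
   Context: For a finite topological space $X$ and $x\in X$, $U_x$ denotes the minimal open set containing $x$ (the intersection of all open sets containing $x$). A nested sequence of open sets around $x$ is a finite sequence $U_0\subsetneq U_1\subsetneq\cdots\subsetneq U_m=X$ of open sets with $U_0=U_x$ such that for each $j$ there is no open set $V$ with $U_j\subsetneq V\subsetneq U_{j+1}$. The furtherness function $\Psi:X\times X\to\{0,1,\dots,|X|-1\}$ is defined by: $\Psi(x,y)$ is the smallest integer $k\ge 0$ such that there exists a nested sequence $(U_j)_{j\ge0}$ of open sets around $x$ with $y\in U_k$. *)

theory Defs
  imports "HOL-Analysis.Analysis"
begin

definition minimal_open :: "'a topology \<Rightarrow> 'a \<Rightarrow> 'a set" where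
  "minimal_open X x = \<Inter> {U. openin X U \<and> x \<in> U}"

definition nested_seq :: "'a topology \<Rightarrow> 'a \<Rightarrow> (nat \<Rightarrow> 'a set) \<Rightarrow> nat \<Rightarrow> bool" where
  "nested_seq X x U m \<longleftrightarrow>
     U 0 = minimal_open X x \<and>
     U m = topspace X \<and>
     (\<forall>j\<le>m. openin X (U j)) \<and>
     (\<forall>j<m. U j \<subset> U (Suc j)) \<and>
     (\<forall>j<m. \<not> (\<exists>V. openin X V \<and> U j \<subset> V \<and> V \<subset> U (Suc j)))"

definition furtherness :: "'a topology \<Rightarrow> 'a \<Rightarrow> 'a \<Rightarrow> nat" where
  "furtherness X x y = (LEAST k. \<exists>U m. nested_seq X x U m \<and> k \<le> m \<and> y \<in> U k)"

end

theory Submission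
  imports Defs
begin

text \<open>In a finite \<open>T\<^sub>0\<close> space, if \<open>A \<subset> D\<close> are open and \<open>z\<close> is a point of \<open>D - A\<close> whose
  minimal open set is smallest, then \<open>U\<^sub>z \<subseteq> A \<union> {z}\<close>, so \<open>A \<union> {z}\<close> is open. Hence the covering
  relation between open sets is exactly the addition of one point, and a nested sequence
  around \<open>x\<close> is a chain of open sets growing by one point at a time from \<open>U\<^sub>x\<close>: its \<open>k\<close>-th
  member has exactly \<open>k\<close> points outside \<open>U\<^sub>x\<close>. Containing \<open>y\<close> means containing \<open>U\<^sub>y\<close>, which
  forces \<open>k \<ge> |U\<^sub>y - U\<^sub>x|\<close>; a chain through the open set \<open>U\<^sub>x \<union> U\<^sub>y\<close> attains this bound.\<close>

lemma minimal_open_in: "x \<in> minimal_open X x"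
  unfolding minimal_open_def by blast

lemma minimal_open_least: "openin X U \<Longrightarrow> x \<in> U \<Longrightarrow> minimal_open X x \<subseteq> U"
  unfolding minimal_open_def by blast

lemma minimal_open_subset_topspace: "x \<in> topspace X \<Longrightarrow> minimal_open X x \<subseteq> topspace X"
  by (simp add: minimal_open_least)

lemma openin_minimal_open:
  assumes "finite (topspace X)" and "x \<in> topspace X"
  shows "openin X (minimal_open X x)"
proof -
  have "{U. openin X U \<and> x \<in> U} \<subseteq> Pow (topspace X)"
    using openin_subset by blast
  then have "finite {U. openin X U \<and> x \<in> U}"
    using assms(1) by (meson finite_Pow_iff finite_subset)
  moreover have "topspace X \<in> {U. openin X U \<and> x \<in> U}"
    using assms(2) by simp
  ultimately show ?thesis
    unfolding minimal_open_def by (intro openin_Inter) auto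
qed

lemma minimal_open_inj:
  assumes "t0_space X" and "x \<in> topspace X" and "y \<in> topspace X"
    and "minimal_open X x = minimal_open X y"
  shows "x = y"
proof (rule ccontr)
  assume "x \<noteq> y"
  then obtain U where U: "openin X U" "x \<notin> U \<longleftrightarrow> y \<in> U"
    using assms(1-3) unfolding t0_space_def by blast
  then consider "x \<in> U" "y \<notin> U" | "y \<in> U" "x \<notin> U"
    by blast
  then show False
  proof cases
    case 1
    then show False
      using minimal_open_least[OF U(1) 1(1)] minimal_open_in[of y X] assms(4) by blast
  next
    case 2
    then show False
      using minimal_open_least[OF U(1) 2(1)] minimal_open_in[of x X] assms(4) by blast
  qed
qed

lemma openin_insert_point:
  assumes fin: "finite (topspace X)" and t0: "t0_space X"
    and A: "openin X A" and D: "openin X D" and "A \<subset> D"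
  obtains z where "z \<in> D - A" and "openin X (insert z A)"
proof -
  have "D - A \<noteq> {}"
    using \<open>A \<subset> D\<close> by blast
  then obtain z where z: "z \<in> D - A"
    and z_min: "\<And>w. w \<in> D - A \<Longrightarrow> card (minimal_open X z) \<le> card (minimal_open X w)"
    using ex_has_least_nat[of "\<lambda>z. z \<in> D - A" _ "\<lambda>z. card (minimal_open X z)"] by blast
  have z_top: "z \<in> topspace X"
    using z openin_subset[OF D] by blast
  have "minimal_open X z \<subseteq> insert z A"
  proof
    fix w assume w: "w \<in> minimal_open X z"
    show "w \<in> insert z A"
    proof (rule ccontr)
      assume w_out: "w \<notin> insert z A"
      have "w \<in> D - A"
        using w w_out minimal_open_least[OF D] z by blast
      then have w_top: "w \<in> topspace X"
        using openin_subset[OF D] by blast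
      have "minimal_open X w \<subseteq> minimal_open X z"
        using minimal_open_least[OF openin_minimal_open[OF fin z_top] w] .
      moreover have "finite (minimal_open X z)"
        using finite_subset[OF minimal_open_subset_topspace[OF z_top] fin] .
      ultimately have "minimal_open X w = minimal_open X z"
        using z_min[OF \<open>w \<in> D - A\<close>] by (meson card_seteq)
      then show False
        using minimal_open_inj[OF t0 w_top z_top] w_out by simp
    qed
  qed
  then have "insert z A = A \<union> minimal_open X z"
    using minimal_open_in[of z X] by blast
  then have "openin X (insert z A)"
    using A openin_minimal_open[OF fin z_top] by auto
  with z show thesis
    by (rule that)
qed

lemma openin_cover_iff_insert:
  assumes fin: "finite (topspace X)" and t0: "t0_space X"
    and A: "openin X A" and B: "openin X B"
  shows "A \<subset> B \<and> (\<nexists>V. openin X V \<and> A \<subset> V \<and> V \<subset> B) \<longleftrightarrow> (\<exists>z. z \<notin> A \<and> B = insert z A)"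
proof
  assume "A \<subset> B \<and> (\<nexists>V. openin X V \<and> A \<subset> V \<and> V \<subset> B)"
  then have "A \<subset> B" and no_between: "\<nexists>V. openin X V \<and> A \<subset> V \<and> V \<subset> B"
    by blast+
  obtain z where z: "z \<in> B - A" "openin X (insert z A)"
    using openin_insert_point[OF fin t0 A B \<open>A \<subset> B\<close>] .
  moreover have "A \<subset> insert z A"
    using z(1) by blast
  ultimately have "\<not> insert z A \<subset> B"
    using no_between by blast
  moreover have "insert z A \<subseteq> B"
    using z(1) \<open>A \<subset> B\<close> by blast
  ultimately show "\<exists>z. z \<notin> A \<and> B = insert z A"
    using z(1) by blast
qed (auto simp: psubset_eq)

definition one_point_chain :: "'a topology \<Rightarrow> (nat \<Rightarrow> 'a set) \<Rightarrow> nat \<Rightarrow> bool" where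
  "one_point_chain X W n \<longleftrightarrow>
     (\<forall>j\<le>n. openin X (W j)) \<and> (\<forall>j<n. \<exists>z. z \<notin> W j \<and> W (Suc j) = insert z (W j))"

lemma nested_seq_iff_one_point_chain:
  assumes "finite (topspace X)" and "t0_space X"
  shows "nested_seq X x U m \<longleftrightarrow>
    U 0 = minimal_open X x \<and> U m = topspace X \<and> one_point_chain X U m"
proof -
  have "U j \<subset> U (Suc j) \<and> (\<nexists>V. openin X V \<and> U j \<subset> V \<and> V \<subset> U (Suc j))
      \<longleftrightarrow> (\<exists>z. z \<notin> U j \<and> U (Suc j) = insert z (U j))"
    if "\<forall>j\<le>m. openin X (U j)" and "j < m" for j
  proof (rule openin_cover_iff_insert[OF assms])
    show "openin X (U j)" "openin X (U (Suc j))"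
      using that by simp_all
  qed
  then show ?thesis
    unfolding nested_seq_def one_point_chain_def by meson
qed

lemma one_point_chain_card_diff:
  assumes "finite (topspace X)" and "one_point_chain X W n" and "j \<le> n"
  shows "W 0 \<subseteq> W j \<and> card (W j - W 0) = j"
  using \<open>j \<le> n\<close>
proof (induction j)
  case (Suc j)
  then have "j < n"
    by simp
  then obtain z where z: "z \<notin> W j" "W (Suc j) = insert z (W j)"
    using assms(2) unfolding one_point_chain_def by blast
  have "finite (W j)"
    using assms Suc.prems unfolding one_point_chain_def
    by (meson Suc_leD finite_subset openin_subset)
  with z Suc show ?case
    by (auto simp: insert_Diff_if)
qed simp

lemma one_point_chain_exists:
  assumes fin: "finite (topspace X)" and t0: "t0_space X"
    and "openin X A" and "openin X B" and "A \<subseteq> B"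
  shows "\<exists>W. W 0 = A \<and> W (card (B - A)) = B \<and> one_point_chain X W (card (B - A))"
  using assms(3-5)
proof (induction "card (B - A)" arbitrary: A)
  case 0
  have "finite B"
    using finite_subset[OF openin_subset[OF \<open>openin X B\<close>] fin] .
  then have "A = B"
    using 0 by auto
  then show ?case
    using 0 by (intro exI[of _ "\<lambda>_. A"]) (simp add: one_point_chain_def)
next
  case (Suc n)
  then have "A \<subset> B"
    by (metis card.empty psubsetI nat.distinct(1) Diff_eq_empty_iff)
  then obtain z where z: "z \<in> B - A" "openin X (insert z A)"
    using openin_insert_point[OF fin t0 \<open>openin X A\<close> \<open>openin X B\<close>] by blast
  have "finite B"
    using finite_subset[OF openin_subset[OF \<open>openin X B\<close>] fin] .
  have "B - insert z A = (B - A) - {z}"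
    by blast
  then have "n = card (B - insert z A)"
    using Suc.hyps(2) z(1) \<open>finite B\<close> by (simp add: card_Diff_singleton)
  moreover have "insert z A \<subseteq> B"
    using z(1) Suc.prems(3) by blast
  ultimately obtain W where W: "W 0 = insert z A" "W n = B" "one_point_chain X W n"
    using Suc.hyps(1)[of "insert z A"] z(2) Suc.prems(2) by auto
  have "one_point_chain X (case_nat A W) (Suc n)"
    unfolding one_point_chain_def
  proof (intro conjI allI impI)
    fix j assume "j \<le> Suc n"
    then show "openin X (case_nat A W j)"
      using W(3) \<open>openin X A\<close> unfolding one_point_chain_def by (cases j) auto
  next
    fix j assume "j < Suc n"
    then show "\<exists>z'. z' \<notin> case_nat A W j \<and> case_nat A W (Suc j) = insert z' (case_nat A W j)"
      using W(1,3) z(1) unfolding one_point_chain_def by (cases j) auto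
  qed
  then show ?case
    using W(2) by (intro exI[of _ "case_nat A W"]) (simp add: Suc.hyps(2)[symmetric])
qed

lemma one_point_chain_append:
  assumes "one_point_chain X W n" and "one_point_chain X V m" and "W n = V 0"
  shows "one_point_chain X (\<lambda>j. if j \<le> n then W j else V (j - n)) (n + m)"
  unfolding one_point_chain_def
proof safe
  fix j assume "j \<le> n + m"
  then show "openin X (if j \<le> n then W j else V (j - n))"
    using assms(1,2) unfolding one_point_chain_def by auto
next
  fix j assume j: "j < n + m"
  consider "j < n" | "j \<ge> n"
    by linarith
  then show "\<exists>z. z \<notin> (if j \<le> n then W j else V (j - n)) \<and>
      (if Suc j \<le> n then W (Suc j) else V (Suc j - n))
        = insert z (if j \<le> n then W j else V (j - n))"
  proof cases
    case 1
    then show ?thesis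
      using assms(1) unfolding one_point_chain_def by auto
  next
    case 2
    then have "(if j \<le> n then W j else V (j - n)) = V (j - n)"
      and "(if Suc j \<le> n then W (Suc j) else V (Suc j - n)) = V (Suc (j - n))"
      using assms(3) by (auto simp: Suc_diff_le le_antisym)
    moreover have "j - n < m"
      using 2 j by linarith
    ultimately show ?thesis
      using assms(2) unfolding one_point_chain_def by simp
  qed
qed

lemma nested_seq_through_open:
  assumes fin: "finite (topspace X)" and t0: "t0_space X" and x: "x \<in> topspace X"
    and C: "openin X C" and "minimal_open X x \<subseteq> C"
  shows "\<exists>U m. nested_seq X x U m \<and> card (C - minimal_open X x) \<le> m
    \<and> U (card (C - minimal_open X x)) = C"
proof -
  let ?Ux = "minimal_open X x"
  let ?k = "card (C - ?Ux)" and ?l = "card (topspace X - C)"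
  obtain W where W: "W 0 = ?Ux" "W ?k = C" "one_point_chain X W ?k"
    using one_point_chain_exists[OF fin t0 openin_minimal_open[OF fin x] C assms(5)] by blast
  obtain V where V: "V 0 = C" "V ?l = topspace X" "one_point_chain X V ?l"
    using one_point_chain_exists[OF fin t0 C openin_topspace openin_subset[OF C]] by blast
  let ?U = "\<lambda>j. if j \<le> ?k then W j else V (j - ?k)"
  have "one_point_chain X ?U (?k + ?l)"
    using one_point_chain_append[OF W(3) V(3)] W(2) V(1) by simp
  moreover have "?U (?k + ?l) = topspace X"
    using W(2) V(1,2) by auto
  ultimately have "nested_seq X x ?U (?k + ?l)"
    using W(1) by (simp add: nested_seq_iff_one_point_chain[OF fin t0])
  then show ?thesis
    using W(2) by (intro exI[of _ ?U] exI[of _ "?k + ?l"]) simp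
qed

lemma card_minimal_open_diff_le_index:
  assumes fin: "finite (topspace X)" and t0: "t0_space X"
    and "nested_seq X x U m" and "k \<le> m" and "y \<in> U k"
  shows "card (minimal_open X y - minimal_open X x) \<le> k"
proof -
  have U: "U 0 = minimal_open X x" "one_point_chain X U m"
    using assms(3) by (simp_all add: nested_seq_iff_one_point_chain[OF fin t0])
  have "openin X (U k)"
    using U(2) assms(4) unfolding one_point_chain_def by blast
  then have "minimal_open X y - minimal_open X x \<subseteq> U k - U 0"
    using minimal_open_least[OF _ assms(5)] U(1) by blast
  moreover have "finite (U k - U 0)"
    using \<open>openin X (U k)\<close> fin by (meson finite_Diff finite_subset openin_subset)
  ultimately have "card (minimal_open X y - minimal_open X x) \<le> card (U k - U 0)"
    by (rule card_mono[rotated])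
  also have "\<dots> = k"
    using one_point_chain_card_diff[OF fin U(2) assms(4)] by simp
  finally show ?thesis .
qed

theorem corollary2p14:
  fixes X :: "'a topology"
  assumes "finite (topspace X)" and "t0_space X"
    and "x \<in> topspace X" and "y \<in> topspace X"
  shows "furtherness X x y = card (minimal_open X y - minimal_open X x)"
proof -
  let ?Ux = "minimal_open X x" and ?Uy = "minimal_open X y"
  have "openin X (?Ux \<union> ?Uy)"
    using openin_minimal_open[OF assms(1,3)] openin_minimal_open[OF assms(1,4)] by blast
  moreover have "(?Ux \<union> ?Uy) - ?Ux = ?Uy - ?Ux"
    by blast
  ultimately obtain U m where "nested_seq X x U m" "card (?Uy - ?Ux) \<le> m"
    and "U (card (?Uy - ?Ux)) = ?Ux \<union> ?Uy"
    using nested_seq_through_open[OF assms(1-3), of "?Ux \<union> ?Uy"] by auto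
  then show ?thesis
    unfolding furtherness_def
  proof (intro Least_equality exI conjI)
    show "y \<in> U (card (?Uy - ?Ux))"
      using \<open>U (card (?Uy - ?Ux)) = ?Ux \<union> ?Uy\<close> minimal_open_in[of y X] by blast
  next
    fix k
    assume "\<exists>U m. nested_seq X x U m \<and> k \<le> m \<and> y \<in> U k"
    then show "card (?Uy - ?Ux) \<le> k"
      using card_minimal_open_diff_le_index[OF assms(1,2)] by blast
  qed
qed

end
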